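(* Let $(M,q)$ be an instance of TNECP and let $\kappa$ be the number of connected components of its associated graph $G$. Then the TNECP instance has at least $2^\kappa-1$ solutions, and if the instance is nondegenerate it has exactly $2^\kappa-1$ solutions.
   Context: $\mathbb{T}=\mathbb{R}\cup\{-\infty\}$, $\oplus=\max$, $\odot=+$; convention $a-(-\infty)=+\infty$. A TNECP instance is $M\in\mathbb{T}^{n\times n}$, $q\in\mathbb{T}^n$ with no all-$(-\infty)$ column in $M$ and no $-\infty$ entry in $q$; a solution is $(w,z)\in\mathbb{T}^n\times\mathbb{T}^n$ with $w\oplus M\odot z=q$ (i.e. $\max(w_i,\max_j(M_{ij}+z_j))=q_i$), $\max_i(w_i+z_i)=-\infty$, and $z$ not the all-$(-\infty)$ vector. The instance is nondegenerate if for each $j$ the minimum $\min_k(q_k-M_{kj})$ is attained by exactly one $k$. The graph $G$ is the bipartite multigraph with row nodes $u_1,\dots,u_n$, column nodes $v_1,\dots,v_n$, a blue edge $u_iv_i$ for every $i$, and a red edge $u_iv_j$ whenever $q_i-M_{ij}=\min_k(q_k-M_{kj})$. *)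

theory Defs
  imports "HOL-Library.Extended_Real"
begin

text \<open>Tropical semiring T = R \<union> {-\<infinity>} is modelled inside ereal as the values \<noteq> \<infinity>.
  max is tropical addition, + is tropical multiplication. In ereal, for finite a,
  a - (-\<infinity>) = \<infinity>, matching the paper's convention.\<close>

definition in_T :: "ereal \<Rightarrow> bool" where
  "in_T a \<longleftrightarrow> a \<noteq> \<infinity>"

definition tnecp_instance :: "('n::finite \<Rightarrow> 'n \<Rightarrow> ereal) \<Rightarrow> ('n \<Rightarrow> ereal) \<Rightarrow> bool" where
  "tnecp_instance M q \<longleftrightarrow>
     (\<forall>i j. in_T (M i j)) \<and>
     (\<forall>j. \<exists>i. M i j \<noteq> -\<infinity>) \<and>
     (\<forall>i. q i \<noteq> -\<infinity> \<and> in_T (q i))"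

definition tnecp_solution ::
  "('n::finite \<Rightarrow> 'n \<Rightarrow> ereal) \<Rightarrow> ('n \<Rightarrow> ereal) \<Rightarrow> ('n \<Rightarrow> ereal) \<Rightarrow> ('n \<Rightarrow> ereal) \<Rightarrow> bool" where
  "tnecp_solution M q w z \<longleftrightarrow>
     (\<forall>i. in_T (w i) \<and> in_T (z i)) \<and>
     (\<forall>i. max (w i) (Max (range (\<lambda>j. M i j + z j))) = q i) \<and>
     Max (range (\<lambda>i. w i + z i)) = -\<infinity> \<and>
     z \<noteq> (\<lambda>_. -\<infinity>)"

definition tnecp_solutions ::
  "('n::finite \<Rightarrow> 'n \<Rightarrow> ereal) \<Rightarrow> ('n \<Rightarrow> ereal) \<Rightarrow> (('n \<Rightarrow> ereal) \<times> ('n \<Rightarrow> ereal)) set" where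
  "tnecp_solutions M q = {(w, z). tnecp_solution M q w z}"

definition tnecp_nondegenerate :: "('n::finite \<Rightarrow> 'n \<Rightarrow> ereal) \<Rightarrow> ('n \<Rightarrow> ereal) \<Rightarrow> bool" where
  "tnecp_nondegenerate M q \<longleftrightarrow>
     (\<forall>j. \<exists>!k. q k - M k j = Min (range (\<lambda>k'. q k' - M k' j)))"

text \<open>Vertices of G: Inl i = row node u_i, Inr j = column node v_j.
  Edge multiplicities are irrelevant for connectivity, so G is recorded as a
  symmetric adjacency relation.\<close>

definition red_edge :: "('n::finite \<Rightarrow> 'n \<Rightarrow> ereal) \<Rightarrow> ('n \<Rightarrow> ereal) \<Rightarrow> 'n \<Rightarrow> 'n \<Rightarrow> bool" where
  "red_edge M q i j \<longleftrightarrow> q i - M i j = Min (range (\<lambda>k. q k - M k j))"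

definition tnecp_graph_edges ::
  "('n::finite \<Rightarrow> 'n \<Rightarrow> ereal) \<Rightarrow> ('n \<Rightarrow> ereal) \<Rightarrow> ('n + 'n) rel" where
  "tnecp_graph_edges M q =
     {(Inl i, Inr j) | i j. i = j \<or> red_edge M q i j} \<union>
     {(Inr j, Inl i) | i j. i = j \<or> red_edge M q i j}"

definition num_components :: "('n::finite \<Rightarrow> 'n \<Rightarrow> ereal) \<Rightarrow> ('n \<Rightarrow> ereal) \<Rightarrow> nat" where
  "num_components M q = card (UNIV // ((tnecp_graph_edges M q)\<^sup>*))"

end

theory Submission
  imports Defs "HOL-Combinatorics.Orbits"
begin

text \<open>Let col_min j = min_k (q k - M k j) and let red_row j be a row attaining this minimum, so
  that u_(red_row j) v_j is a red edge. For every nonempty set S of rows with red_row ` S = S,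
  putting w = -\<infinity>, z = col_min on S and w = q, z = -\<infinity> off S gives a solution. In the
  nondegenerate case every solution arises in this way: always z \<le> col_min, and a row i with
  w i \<noteq> q i is tight at some column j, which forces z j = col_min j and i = red_row j.

  Every component of G is closed under red_row and therefore contains a periodic point of red_row;
  the periodic points lying in a nonempty set of components form an invariant set, and distinct
  sets of components give distinct invariant sets. In the
  nondegenerate case the red edges are exactly the edges u_(red_row j) v_j, so the components of G
  are the classes of the equivalence generated by red_row, and an invariant set is determined by
  the components it meets.\<close>

lemma ex_less_funpow_eq:
  fixes f :: "'a::finite \<Rightarrow> 'a"
  obtains a b where "a < b" "(f ^^ a) x = (f ^^ b) x"
proof -
  have "\<not> inj (\<lambda>n. (f ^^ n) x)"
    using finite_imageD[of "\<lambda>n. (f ^^ n) x" UNIV] by auto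
  then obtain a b where "a \<noteq> b" "(f ^^ a) x = (f ^^ b) x"
    unfolding inj_def by blast
  then show thesis
    using that by (cases a b rule: linorder_cases) auto
qed

lemma ex_funpow_self_in_orbit:
  fixes f :: "'a::finite \<Rightarrow> 'a"
  shows "\<exists>n. (f ^^ n) x \<in> orbit f ((f ^^ n) x)"
proof -
  obtain a b where "a < b" "(f ^^ a) x = (f ^^ b) x"
    by (rule ex_less_funpow_eq)
  then have "(f ^^ (b - a)) ((f ^^ a) x) = (f ^^ a) x"
    by (metis comp_apply funpow_add le_add_diff_inverse2 less_imp_le)
  then have "(f ^^ a) x \<in> orbit f ((f ^^ a) x)"
    unfolding orbit_altdef mem_Collect_eq using \<open>a < b\<close> zero_less_diff by metis
  then show ?thesis ..
qed

lemma self_in_orbit_if_image_eq: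
  fixes f :: "'a::finite \<Rightarrow> 'a"
  assumes "f ` S = S" "x \<in> S"
  shows "x \<in> orbit f x"
proof -
  have "bij_betw f S S"
    using assms(1) by (simp add: bij_betw_def eq_card_imp_inj_on)
  then have bij: "bij_betw (f ^^ n) S S" for n
    by (rule bij_betw_funpow)
  obtain a b where "a < b" "(f ^^ a) x = (f ^^ b) x"
    by (rule ex_less_funpow_eq)
  then have "(f ^^ a) ((f ^^ (b - a)) x) = (f ^^ a) x"
    by (metis comp_apply funpow_add le_add_diff_inverse less_imp_le)
  moreover have "(f ^^ (b - a)) x \<in> S"
    using bij assms(2) by (auto simp: bij_betw_def)
  ultimately have "(f ^^ (b - a)) x = x"
    using bij[of a] assms(2) by (auto simp: bij_betw_def dest: inj_onD)
  then show ?thesis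
    using \<open>a < b\<close> by (auto simp: orbit_altdef intro!: exI[of _ "b - a"])
qed

lemma funpow_mem_if_image_subset:
  assumes "f ` S \<subseteq> S" "x \<in> S"
  shows "(f ^^ n) x \<in> S"
  by (induction n) (use assms in auto)

lemma orbit_subset_if_image_subset:
  assumes "f ` S \<subseteq> S" "x \<in> S"
  shows "orbit f x \<subseteq> S"
proof
  fix y assume "y \<in> orbit f x"
  then show "y \<in> S"
    by induction (use assms in auto)
qed

lemma self_in_orbit_mem_if_funpow_mem:
  assumes "f ` S \<subseteq> S" "x \<in> orbit f x" "(f ^^ n) x \<in> S"
  shows "x \<in> S"
proof -
  have "(f ^^ n) x \<in> orbit f x"
    using assms(2) by (rule funpow_in_orbit)
  with assms(2) have "x \<in> orbit f ((f ^^ n) x)"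
    by (rule orbit_swap)
  then show ?thesis
    using orbit_subset_if_image_subset[OF assms(1,3)] by blast
qed

text \<open>x \<in> orbit f x says that x is periodic: (f ^^ n) x = x for some n > 0.\<close>

definition periodic_part :: "('a \<Rightarrow> 'a) \<Rightarrow> 'a set \<Rightarrow> 'a set" where
  "periodic_part f A = {x \<in> A. x \<in> orbit f x}"

lemma image_periodic_part:
  assumes "f ` A \<subseteq> A"
  shows "f ` periodic_part f A = periodic_part f A"
proof (intro equalityI subsetI)
  fix y assume "y \<in> f ` periodic_part f A"
  then obtain x where "x \<in> A" "x \<in> orbit f x" "y = f x"
    by (auto simp: periodic_part_def)
  then show "y \<in> periodic_part f A"
    using assms by (auto simp: periodic_part_def intro: self_in_orbit_trans orbit.base)
next
  fix x assume x: "x \<in> periodic_part f A"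
  then have "x \<in> orbit f x"
    by (simp add: periodic_part_def)
  then obtain n where "0 < n" "(f ^^ n) x = x"
    by (auto simp: orbit_altdef)
  then obtain y where "y \<in> orbit f x" "x = f y"
    using funpow_in_orbit[OF \<open>x \<in> orbit f x\<close>, of "n - 1"]
    by (metis Suc_diff_1 comp_apply funpow.simps(2))
  moreover have "y \<in> orbit f y"
    using \<open>x \<in> orbit f x\<close> \<open>y \<in> orbit f x\<close> by (rule self_in_orbit_trans)
  moreover have "y \<in> A"
    using x \<open>y \<in> orbit f x\<close> orbit_subset_if_image_subset[OF assms] by (auto simp: periodic_part_def)
  ultimately show "x \<in> f ` periodic_part f A"
    by (auto simp: periodic_part_def)
qed

definition nonempty_invariant_sets :: "('a \<Rightarrow> 'a) \<Rightarrow> 'a set set" where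
  "nonempty_invariant_sets f = {S. S \<noteq> {} \<and> f ` S = S}"

context
  fixes f :: "'a::finite \<Rightarrow> 'a" and E :: "'a rel"
  assumes equiv_E: "equiv UNIV E" and step_in_E: "\<And>x. (x, f x) \<in> E"
begin

lemma image_class_subset:
  assumes "X \<in> UNIV // E"
  shows "f ` X \<subseteq> X"
  using assms equiv_E step_in_E by (auto intro: in_quotient_imp_closed)

lemma periodic_part_class_nonempty:
  assumes "X \<in> UNIV // E"
  shows "periodic_part f X \<noteq> {}"
proof -
  obtain x where "x \<in> X"
    using assms equiv_E in_quotient_imp_non_empty by blast
  obtain n where "(f ^^ n) x \<in> orbit f ((f ^^ n) x)"
    using ex_funpow_self_in_orbit by blast
  moreover have "(f ^^ n) x \<in> X"
    using funpow_mem_if_image_subset[OF image_class_subset[OF assms] \<open>x \<in> X\<close>] .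
  ultimately show ?thesis
    by (auto simp: periodic_part_def)
qed

lemma inj_on_periodic_part_Union: "inj_on (\<lambda>F. periodic_part f (\<Union>F)) (Pow (UNIV // E))"
proof -
  have "X \<in> G"
    if F: "F \<subseteq> UNIV // E" and G: "G \<subseteq> UNIV // E"
      and eq: "periodic_part f (\<Union>F) = periodic_part f (\<Union>G)" and "X \<in> F"
    for F G X
  proof -
    obtain p where "p \<in> periodic_part f X"
      using periodic_part_class_nonempty F \<open>X \<in> F\<close> by blast
    then have "p \<in> periodic_part f (\<Union>G)"
      using eq \<open>X \<in> F\<close> by (auto simp: periodic_part_def)
    then obtain Y where "Y \<in> G" "p \<in> Y"
      by (auto simp: periodic_part_def)
    then have "X = Y"
      using \<open>p \<in> periodic_part f X\<close> quotient_disj[OF equiv_E] F G \<open>X \<in> F\<close>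
      by (auto simp: periodic_part_def)
    with \<open>Y \<in> G\<close> show ?thesis by simp
  qed
  then show ?thesis
    by (intro inj_onI) (simp, blast)
qed

lemma periodic_part_Union_mem_nonempty_invariant_sets:
  assumes "F \<subseteq> UNIV // E" "F \<noteq> {}"
  shows "periodic_part f (\<Union>F) \<in> nonempty_invariant_sets f"
proof -
  have "f ` \<Union>F \<subseteq> \<Union>F"
    using image_class_subset assms(1) by blast
  moreover have "periodic_part f (\<Union>F) \<noteq> {}"
    using periodic_part_class_nonempty assms by (auto simp: periodic_part_def)
  ultimately show ?thesis
    by (simp add: nonempty_invariant_sets_def image_periodic_part)
qed

lemma card_nonempty_invariant_sets_ge:
  "2 ^ card (UNIV // E) - 1 \<le> card (nonempty_invariant_sets f)"
proof -
  let ?\<phi> = "\<lambda>F. periodic_part f (\<Union>F)"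
  have "inj_on ?\<phi> (Pow (UNIV // E) - {{}})"
    using inj_on_periodic_part_Union by (rule inj_on_subset) blast
  moreover have "?\<phi> ` (Pow (UNIV // E) - {{}}) \<subseteq> nonempty_invariant_sets f"
    using periodic_part_Union_mem_nonempty_invariant_sets by blast
  ultimately have "card (Pow (UNIV // E) - {{}}) \<le> card (nonempty_invariant_sets f)"
    by (intro card_inj_on_le) auto
  then show ?thesis
    by (simp add: card_Diff_singleton card_Pow)
qed

text \<open>If E is generated by the graph of f, then an invariant set S is recovered from the classes
  it meets: a function constant along the steps of f, such as "the forward orbit meets S", is
  constant on E-classes.\<close>

lemma nonempty_invariant_set_eq_periodic_part:
  assumes E_generated: "E \<subseteq> (\<Union>x. {(x, f x), (f x, x)})\<^sup>*"
    and S: "S \<in> nonempty_invariant_sets f"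
  shows "S = periodic_part f (\<Union>{X \<in> UNIV // E. X \<inter> S \<noteq> {}})"
proof (intro equalityI subsetI)
  fix x assume "x \<in> S"
  moreover have "x \<in> E `` {x}"
    using equiv_class_self[OF equiv_E UNIV_I] .
  ultimately show "x \<in> periodic_part f (\<Union>{X \<in> UNIV // E. X \<inter> S \<noteq> {}})"
    using S self_in_orbit_if_image_eq
    by (auto simp: periodic_part_def nonempty_invariant_sets_def intro: quotientI)
next
  fix p assume "p \<in> periodic_part f (\<Union>{X \<in> UNIV // E. X \<inter> S \<noteq> {}})"
  then obtain X s where p: "p \<in> orbit f p" "p \<in> X" and X: "X \<in> UNIV // E" and "s \<in> X" "s \<in> S"
    by (auto simp: periodic_part_def)
  define reaches_S where "reaches_S y \<longleftrightarrow> (\<exists>n. (f ^^ n) y \<in> S)" for y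
  have S_closed: "f ` S \<subseteq> S"
    using S by (simp add: nonempty_invariant_sets_def)
  have reaches_S_step: "reaches_S (f y) \<longleftrightarrow> reaches_S y" for y
  proof
    assume "reaches_S (f y)"
    then show "reaches_S y"
      unfolding reaches_S_def by (metis funpow_Suc_right comp_apply)
  next
    assume "reaches_S y"
    then obtain n where "(f ^^ n) y \<in> S"
      unfolding reaches_S_def by blast
    then have "(f ^^ n) (f y) \<in> S"
      using S_closed by (metis funpow_swap1 image_subset_iff)
    then show "reaches_S (f y)"
      unfolding reaches_S_def by blast
  qed
  have "reaches_S a = reaches_S b" if "(a, b) \<in> (\<Union>x. {(x, f x), (f x, x)})\<^sup>*" for a b
    using that by (induction rule: rtrancl_induct) (auto simp: reaches_S_step)
  moreover have "(s, p) \<in> E"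
    using X \<open>s \<in> X\<close> \<open>p \<in> X\<close> equiv_E in_quotient_imp_in_rel by fastforce
  moreover have "reaches_S s"
    using \<open>s \<in> S\<close> unfolding reaches_S_def by (metis funpow_0)
  ultimately obtain n where "(f ^^ n) p \<in> S"
    using E_generated unfolding reaches_S_def by blast
  then show "p \<in> S"
    using self_in_orbit_mem_if_funpow_mem[OF S_closed p(1)] by blast
qed

lemma card_nonempty_invariant_sets_eq:
  assumes "E \<subseteq> (\<Union>x. {(x, f x), (f x, x)})\<^sup>*"
  shows "card (nonempty_invariant_sets f) = 2 ^ card (UNIV // E) - 1"
proof -
  let ?\<phi> = "\<lambda>F. periodic_part f (\<Union>F)"
  have "nonempty_invariant_sets f \<subseteq> ?\<phi> ` (Pow (UNIV // E) - {{}})"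
  proof
    fix S assume S: "S \<in> nonempty_invariant_sets f"
    then obtain x where "x \<in> S"
      by (auto simp: nonempty_invariant_sets_def)
    then have "{X \<in> UNIV // E. X \<inter> S \<noteq> {}} \<noteq> {}"
      using equiv_class_self[OF equiv_E UNIV_I, of x] by (blast intro: quotientI)
    then show "S \<in> ?\<phi> ` (Pow (UNIV // E) - {{}})"
      using nonempty_invariant_set_eq_periodic_part[OF assms S] by blast
  qed
  moreover have "?\<phi> ` (Pow (UNIV // E) - {{}}) \<subseteq> nonempty_invariant_sets f"
    using periodic_part_Union_mem_nonempty_invariant_sets by blast
  moreover have "inj_on ?\<phi> (Pow (UNIV // E) - {{}})"
    using inj_on_periodic_part_Union by (rule inj_on_subset) blast
  ultimately have "card (nonempty_invariant_sets f) = card (Pow (UNIV // E) - {{}})"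
    by (metis card_image subset_antisym)
  then show ?thesis
    by (simp add: card_Diff_singleton card_Pow)
qed

end

lemma image_eq_if_subset_image_of_subset:
  assumes "finite A" "B \<subseteq> A" "A \<subseteq> f ` B"
  shows "B = A" "f ` A = A"
proof -
  have "card A \<le> card (f ` B)"
    using assms by (intro card_mono) (auto intro: finite_subset)
  also have "\<dots> \<le> card B"
    using assms by (intro card_image_le) (rule finite_subset)
  finally have "card A \<le> card B" .
  then show "B = A"
    using assms(1,2) by (simp add: card_seteq)
  then show "f ` A = A"
    using assms(1,3) by (metis card_image_le card_seteq finite_imageI)
qed

lemma equiv_inv_image:
  assumes "equiv UNIV r"
  shows "equiv UNIV (inv_image r f)"
  using assms by (auto simp: equiv_def refl_on_def intro: sym_inv_image trans_inv_image)

lemma card_quotient_inv_image_Inl: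
  assumes E: "equiv UNIV E" and meets_Inl: "\<And>b. \<exists>a. (Inr b, Inl a) \<in> E"
  shows "card (UNIV // E) = card (UNIV // inv_image E Inl)"
proof -
  have classes: "UNIV // E = (\<lambda>a. E `` {Inl a}) ` UNIV"
  proof (intro equalityI subsetI)
    fix X assume "X \<in> UNIV // E"
    then obtain x where X: "X = E `` {x}"
      by (auto elim: quotientE)
    obtain a where "(x, Inl a) \<in> E"
      using meets_Inl equiv_class_self[OF E UNIV_I] by (cases x) (auto simp: Image_def)
    then show "X \<in> (\<lambda>a. E `` {Inl a}) ` UNIV"
      unfolding X using equiv_class_eq[OF E] by blast
  qed (auto intro: quotientI)
  have "inj_on (vimage Inl) (UNIV // E)"
  proof (unfold classes, rule inj_onI, clarify)
    fix a a' assume "Inl -` E `` {Inl a} = Inl -` E `` {Inl a'}"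
    moreover have "a' \<in> Inl -` E `` {Inl a'}"
      using equiv_class_self[OF E UNIV_I] by simp
    ultimately have "a' \<in> Inl -` E `` {Inl a}"
      by (simp only:)
    then have "(Inl a, Inl a') \<in> E"
      by simp
    then show "E `` {Inl a} = E `` {Inl a'}"
      by (rule equiv_class_eq[OF E])
  qed
  moreover have "vimage Inl ` (UNIV // E) = UNIV // inv_image E Inl"
    unfolding classes image_image by (auto simp: quotient_def)
  ultimately show ?thesis
    by (metis card_image)
qed

lemma ereal_add_le_iff_le_minus:
  fixes a x c :: ereal
  assumes "a \<noteq> \<infinity>" "x \<noteq> \<infinity>" "\<bar>c\<bar> \<noteq> \<infinity>"
  shows "a + x \<le> c \<longleftrightarrow> x \<le> c - a"
  using assms by (cases a; cases x; cases c) auto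

lemma tnecp_solutionD:
  assumes "tnecp_solution M q w z"
  shows "z j \<noteq> \<infinity>" "max (w i) (Max (range (\<lambda>j. M i j + z j))) = q i"
    "w i + z i = -\<infinity>" "\<exists>j. z j \<noteq> -\<infinity>"
proof -
  show "z j \<noteq> \<infinity>" "max (w i) (Max (range (\<lambda>j. M i j + z j))) = q i" "\<exists>j. z j \<noteq> -\<infinity>"
    using assms by (auto simp: tnecp_solution_def in_T_def)
  have "w i + z i \<le> Max (range (\<lambda>i. w i + z i))"
    by (rule Max_ge) auto
  moreover have "Max (range (\<lambda>i. w i + z i)) = -\<infinity>"
    using assms by (simp add: tnecp_solution_def)
  ultimately show "w i + z i = -\<infinity>"
    by (metis ereal_infty_less_eq(2))
qed

lemma tnecp_graph_edgesI:
  assumes "i = j \<or> red_edge M q i j"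
  shows "(Inl i, Inr j) \<in> tnecp_graph_edges M q" "(Inr j, Inl i) \<in> tnecp_graph_edges M q"
  using assms unfolding tnecp_graph_edges_def by blast+

lemma tnecp_graph_edgesE:
  assumes "(a, b) \<in> tnecp_graph_edges M q"
  obtains i j where "i = j \<or> red_edge M q i j" "a = Inl i \<and> b = Inr j \<or> a = Inr j \<and> b = Inl i"
  using assms unfolding tnecp_graph_edges_def by auto

lemma equiv_tnecp_graph_components: "equiv UNIV ((tnecp_graph_edges M q)\<^sup>*)"
proof -
  have "sym (tnecp_graph_edges M q)"
    unfolding sym_def tnecp_graph_edges_def by blast
  then show ?thesis
    by (simp add: equiv_def refl_rtrancl sym_rtrancl trans_rtrancl)
qed

locale tnecp =
  fixes M :: "'n::finite \<Rightarrow> 'n \<Rightarrow> ereal" and q :: "'n \<Rightarrow> ereal"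
  assumes is_instance: "tnecp_instance M q"
begin

definition col_min :: "'n \<Rightarrow> ereal" where
  "col_min j = Min (range (\<lambda>i. q i - M i j))"

definition red_row :: "'n \<Rightarrow> 'n" where
  "red_row j = (SOME i. red_edge M q i j)"

lemma q_finite: "q i \<noteq> \<infinity>" "q i \<noteq> -\<infinity>"
  using is_instance by (auto simp: tnecp_instance_def in_T_def)

lemma M_neq_infinity: "M i j \<noteq> \<infinity>"
  using is_instance by (auto simp: tnecp_instance_def in_T_def)

lemma col_min_le: "col_min j \<le> q i - M i j"
  unfolding col_min_def by (rule Min_le) auto

lemma red_edge_iff: "red_edge M q i j \<longleftrightarrow> q i - M i j = col_min j"
  unfolding red_edge_def col_min_def ..

lemma red_edge_red_row: "red_edge M q (red_row j) j"
proof -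
  have "col_min j \<in> range (\<lambda>i. q i - M i j)"
    unfolding col_min_def by (rule Min_in) auto
  then obtain i where "col_min j = q i - M i j"
    by blast
  then have "red_edge M q i j"
    by (simp add: red_edge_iff)
  then show ?thesis
    unfolding red_row_def by (rule someI)
qed

lemma col_min_finite: "col_min j \<noteq> \<infinity>" "col_min j \<noteq> -\<infinity>"
proof -
  obtain i where "M i j \<noteq> -\<infinity>"
    using is_instance unfolding tnecp_instance_def by blast
  then have "q i - M i j \<noteq> \<infinity>"
    using q_finite[of i] M_neq_infinity[of i j] by (cases "q i"; cases "M i j") auto
  then show "col_min j \<noteq> \<infinity>"
    using col_min_le[of j i] by auto
  have "q (red_row j) - M (red_row j) j \<noteq> -\<infinity>"
    using q_finite[of "red_row j"] M_neq_infinity[of "red_row j" j]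
    by (cases "q (red_row j)"; cases "M (red_row j) j") auto
  then show "col_min j \<noteq> -\<infinity>"
    using red_edge_red_row[of j] by (simp add: red_edge_iff)
qed

lemma add_le_q_iff_le_minus:
  assumes "x \<noteq> \<infinity>"
  shows "M i j + x \<le> q i \<longleftrightarrow> x \<le> q i - M i j"
  using assms M_neq_infinity q_finite by (intro ereal_add_le_iff_le_minus) auto

lemma add_col_min_le: "M i j + col_min j \<le> q i"
  using col_min_le col_min_finite by (simp add: add_le_q_iff_le_minus)

lemma eq_col_min_if_add_eq:
  assumes "M i j + x = q i" "x \<le> col_min j"
  shows "x = col_min j"
proof -
  have "M i j \<noteq> -\<infinity>"
    using assms q_finite[of i] col_min_finite(1)[of j] by (cases x) auto
  then have "\<bar>M i j\<bar> \<noteq> \<infinity>"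
    using M_neq_infinity[of i j] by auto
  then have "x = q i - M i j"
    using assms(1) by (simp add: ereal_eq_minus add.commute)
  then show ?thesis
    using assms(2) col_min_le[of j i] by simp
qed

lemma red_edge_iff_add_col_min: "red_edge M q i j \<longleftrightarrow> M i j + col_min j = q i"
proof -
  have "M i j \<noteq> -\<infinity>" if "red_edge M q i j \<or> M i j + col_min j = q i"
    using that col_min_finite[of j] q_finite[of i] by (cases "col_min j") (auto simp: red_edge_iff)
  then have "\<bar>M i j\<bar> \<noteq> \<infinity>" if "red_edge M q i j \<or> M i j + col_min j = q i"
    using that M_neq_infinity[of i j] by auto
  then show ?thesis
    unfolding red_edge_iff by (metis add.commute ereal_eq_minus)
qed

lemma nondegenerate_red_edge_imp_red_row:
  assumes "tnecp_nondegenerate M q" "red_edge M q i j"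
  shows "i = red_row j"
proof -
  have "\<exists>!k. red_edge M q k j"
    using assms(1) unfolding tnecp_nondegenerate_def red_edge_def by blast
  then show ?thesis
    using assms(2) red_edge_red_row[of j] by blast
qed

definition sol_of :: "'n set \<Rightarrow> ('n \<Rightarrow> ereal) \<times> ('n \<Rightarrow> ereal)" where
  "sol_of S = ((\<lambda>i. if i \<in> S then -\<infinity> else q i), (\<lambda>j. if j \<in> S then col_min j else -\<infinity>))"

lemma inj_sol_of: "inj sol_of"
proof (rule injI)
  fix S T assume "sol_of S = sol_of T"
  then have snd_eq: "snd (sol_of S) j = snd (sol_of T) j" for j
    by simp
  have "j \<in> S \<longleftrightarrow> j \<in> T" for j
    using snd_eq[of j] col_min_finite(2)[of j] by (auto simp: sol_of_def split: if_splits)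
  then show "S = T"
    by blast
qed

lemma sol_of_mem_solutions:
  assumes "S \<noteq> {}" "S \<subseteq> red_row ` S"
  shows "sol_of S \<in> tnecp_solutions M q"
proof -
  define w where "w i = (if i \<in> S then -\<infinity> else q i)" for i
  define z where "z j = (if j \<in> S then col_min j else -\<infinity>)" for j
  have "M i j + z j \<le> q i" for i j
    using add_col_min_le[of i j] M_neq_infinity[of i j] by (cases "M i j") (auto simp: z_def)
  then have Max_le: "Max (range (\<lambda>j. M i j + z j)) \<le> q i" for i
    by simp
  have Max_ge: "q i \<le> Max (range (\<lambda>j. M i j + z j))" if "i \<in> S" for i
  proof -
    obtain j where "j \<in> S" "i = red_row j"
      using assms(2) \<open>i \<in> S\<close> by blast
    then have "M i j + z j = q i"
      using red_edge_red_row[of j] by (simp add: z_def red_edge_iff_add_col_min)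
    moreover have "M i j + z j \<le> Max (range (\<lambda>j. M i j + z j))"
      by (rule Max_ge) auto
    ultimately show ?thesis
      by simp
  qed
  have "max (w i) (Max (range (\<lambda>j. M i j + z j))) = q i" for i
    using Max_le[of i] Max_ge[of i] by (cases "i \<in> S") (auto simp: w_def max_def intro: antisym)
  moreover have "w i + z i = -\<infinity>" for i
    using q_finite[of i] col_min_finite[of i] by (cases "q i") (auto simp: w_def z_def)
  then have "Max (range (\<lambda>i. w i + z i)) = -\<infinity>"
    by (simp only:) simp
  moreover have "z \<noteq> (\<lambda>_. -\<infinity>)"
    using assms(1) col_min_finite(2) by (auto simp: z_def fun_eq_iff)
  moreover have "in_T (w i) \<and> in_T (z i)" for i
    using q_finite[of i] col_min_finite[of i] by (auto simp: w_def z_def in_T_def)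
  ultimately have "tnecp_solution M q w z"
    by (simp add: tnecp_solution_def)
  moreover have "sol_of S = (w, z)"
    by (simp add: sol_of_def w_def[abs_def] z_def[abs_def])
  ultimately show ?thesis
    by (simp add: tnecp_solutions_def)
qed

lemma solution_le_col_min:
  assumes "tnecp_solution M q w z"
  shows "z j \<le> col_min j"
proof -
  let ?i = "red_row j"
  have "M ?i j + z j \<le> Max (range (\<lambda>j. M ?i j + z j))"
    by (rule Max_ge) auto
  also have "\<dots> \<le> q ?i"
    using tnecp_solutionD(2)[OF assms, of ?i] by (metis max.cobounded2)
  finally have "z j \<le> q ?i - M ?i j"
    using tnecp_solutionD(1)[OF assms] by (simp add: add_le_q_iff_le_minus)
  then show ?thesis
    using red_edge_red_row[of j] by (simp add: red_edge_iff)
qed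

lemma nondegenerate_solution_row:
  assumes "tnecp_nondegenerate M q" "tnecp_solution M q w z"
  shows "w i = q i \<or> (\<exists>j. i = red_row j \<and> z j = col_min j)"
proof (cases "w i = q i")
  case False
  then have "Max (range (\<lambda>j. M i j + z j)) = q i"
    using tnecp_solutionD(2)[OF assms(2), of i] by (metis max_def)
  moreover have "Max (range (\<lambda>j. M i j + z j)) \<in> range (\<lambda>j. M i j + z j)"
    by (rule Max_in) auto
  ultimately obtain j where "M i j + z j = q i"
    by auto
  then have "z j = col_min j"
    using solution_le_col_min[OF assms(2)] by (rule eq_col_min_if_add_eq)
  moreover have "i = red_row j"
    using assms(1) \<open>M i j + z j = q i\<close> \<open>z j = col_min j\<close>
    by (simp add: nondegenerate_red_edge_imp_red_row red_edge_iff_add_col_min)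
  ultimately show ?thesis
    by blast
qed simp

lemma nondegenerate_solution_eq_sol_of:
  assumes nondeg: "tnecp_nondegenerate M q" and sol: "tnecp_solution M q w z"
  shows "\<exists>S \<in> nonempty_invariant_sets red_row. (w, z) = sol_of S"
proof -
  define S where "S = {j. z j \<noteq> -\<infinity>}"
  define T where "T = {j. z j = col_min j}"
  have "T \<subseteq> S"
  proof
    fix j assume "j \<in> T"
    then show "j \<in> S"
      using col_min_finite(2)[of j] by (simp add: S_def T_def)
  qed
  have w_S: "w i = -\<infinity>" if "i \<in> S" for i
    using tnecp_solutionD(1)[OF sol, of i] tnecp_solutionD(3)[OF sol, of i] that
    by (cases "w i"; cases "z i") (auto simp: S_def)
  have "S \<subseteq> red_row ` T"
  proof
    fix i assume "i \<in> S"
    then have "w i \<noteq> q i"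
      using w_S q_finite(2) by metis
    then show "i \<in> red_row ` T"
      using nondegenerate_solution_row[OF nondeg sol, of i] by (auto simp: T_def)
  qed
  then have "T = S" "red_row ` S = S"
    using image_eq_if_subset_image_of_subset[OF finite \<open>T \<subseteq> S\<close>] by auto
  have "w i = q i" if "i \<notin> S" for i
    using nondegenerate_solution_row[OF nondeg sol, of i] that \<open>T = S\<close> \<open>red_row ` S = S\<close>
    by (auto simp: T_def)
  then have "(w, z) = sol_of S"
    using w_S \<open>T = S\<close> by (auto simp: sol_of_def fun_eq_iff S_def T_def)
  moreover have "S \<noteq> {}"
    using tnecp_solutionD(4)[OF sol] by (auto simp: S_def)
  ultimately show ?thesis
    using \<open>red_row ` S = S\<close> by (auto simp: nonempty_invariant_sets_def)
qed

lemma image_sol_of_subset_solutions: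
  "sol_of ` nonempty_invariant_sets red_row \<subseteq> tnecp_solutions M q"
proof (rule image_subsetI)
  fix S assume "S \<in> nonempty_invariant_sets red_row"
  then show "sol_of S \<in> tnecp_solutions M q"
    by (intro sol_of_mem_solutions) (simp_all add: nonempty_invariant_sets_def)
qed

lemma nondegenerate_solutions_eq_image_sol_of:
  assumes "tnecp_nondegenerate M q"
  shows "tnecp_solutions M q = sol_of ` nonempty_invariant_sets red_row"
proof (rule antisym[OF _ image_sol_of_subset_solutions], rule subsetI)
  fix x assume "x \<in> tnecp_solutions M q"
  then obtain w z where "x = (w, z)" "tnecp_solution M q w z"
    by (auto simp: tnecp_solutions_def)
  then show "x \<in> sol_of ` nonempty_invariant_sets red_row"
    using nondegenerate_solution_eq_sol_of[OF assms] by blast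
qed

definition row_equiv :: "'n rel" where
  "row_equiv = inv_image ((tnecp_graph_edges M q)\<^sup>*) Inl"

lemma equiv_row_equiv: "equiv UNIV row_equiv"
  unfolding row_equiv_def by (intro equiv_inv_image equiv_tnecp_graph_components)

lemma num_components_eq_card_row_classes: "num_components M q = card (UNIV // row_equiv)"
  unfolding num_components_def row_equiv_def
  using tnecp_graph_edgesI(2)[of _ _ M q]
  by (intro card_quotient_inv_image_Inl equiv_tnecp_graph_components) blast

lemma red_row_mem_row_equiv: "(j, red_row j) \<in> row_equiv"
proof -
  have "(Inl j, Inr j) \<in> tnecp_graph_edges M q" "(Inr j, Inl (red_row j)) \<in> tnecp_graph_edges M q"
    using red_edge_red_row[of j] by (auto intro: tnecp_graph_edgesI)
  then show ?thesis
    unfolding row_equiv_def by auto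
qed

lemma nondegenerate_row_equiv_subset:
  assumes "tnecp_nondegenerate M q"
  shows "row_equiv \<subseteq> (\<Union>x. {(x, red_row x), (red_row x, x)})\<^sup>*"
proof -
  let ?G = "\<Union>x. {(x, red_row x), (red_row x, x)}"
  let ?node = "case_sum id id :: 'n + 'n \<Rightarrow> 'n"
  \<comment> \<open>Identifying u_i with v_i turns blue edges into loops and red edges into steps of red_row.\<close>
  have G_edge: "(i, j) \<in> ?G\<^sup>* \<and> (j, i) \<in> ?G\<^sup>*" if "i = j \<or> red_edge M q i j" for i j
  proof (cases "i = j")
    case False
    then have "i = red_row j"
      using that nondegenerate_red_edge_imp_red_row[OF assms] by blast
    then have "(i, j) \<in> ?G" "(j, i) \<in> ?G"
      by blast+
    then show ?thesis
      by (blast intro: r_into_rtrancl)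
  qed simp
  have graph_edge: "(?node a, ?node b) \<in> ?G\<^sup>*" if edge: "(a, b) \<in> tnecp_graph_edges M q" for a b
  proof -
    from edge obtain i j where "i = j \<or> red_edge M q i j" "a = Inl i \<and> b = Inr j \<or> a = Inr j \<and> b = Inl i"
      by (rule tnecp_graph_edgesE)
    then show ?thesis
      using G_edge[of i j] by auto
  qed
  have "(?node a, ?node b) \<in> ?G\<^sup>*" if "(a, b) \<in> (tnecp_graph_edges M q)\<^sup>*" for a b
    using that by (induction rule: rtrancl_induct) (blast intro: rtrancl_trans graph_edge)+
  from this[of "Inl i" "Inl i'" for i i'] show ?thesis
    unfolding row_equiv_def by auto
qed

end

theorem theorem3p4:
  fixes M :: "'n::finite \<Rightarrow> 'n \<Rightarrow> ereal" and q :: "'n \<Rightarrow> ereal"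
  assumes "tnecp_instance M q"
  shows "(infinite (tnecp_solutions M q) \<or> 2 ^ num_components M q - 1 \<le> card (tnecp_solutions M q))
         \<and> (tnecp_nondegenerate M q \<longrightarrow>
           finite (tnecp_solutions M q) \<and> card (tnecp_solutions M q) = 2 ^ num_components M q - 1)"
proof -
  interpret tnecp M q
    by unfold_locales (rule assms)
  let ?Inv = "nonempty_invariant_sets red_row"
  have inj: "inj_on sol_of ?Inv"
    using inj_sol_of by (rule inj_on_subset) simp
  have "2 ^ num_components M q - 1 \<le> card ?Inv"
    unfolding num_components_eq_card_row_classes
    using equiv_row_equiv red_row_mem_row_equiv by (rule card_nonempty_invariant_sets_ge)
  then have "infinite (tnecp_solutions M q) \<or> 2 ^ num_components M q - 1 \<le> card (tnecp_solutions M q)"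
    using card_inj_on_le[OF inj image_sol_of_subset_solutions] by auto
  moreover have "finite (tnecp_solutions M q) \<and> card (tnecp_solutions M q) = 2 ^ num_components M q - 1"
    if nondeg: "tnecp_nondegenerate M q"
  proof -
    have "card ?Inv = 2 ^ num_components M q - 1"
      unfolding num_components_eq_card_row_classes
      using equiv_row_equiv red_row_mem_row_equiv nondegenerate_row_equiv_subset[OF nondeg]
      by (rule card_nonempty_invariant_sets_eq)
    then show ?thesis
      using nondegenerate_solutions_eq_image_sol_of[OF nondeg] card_image[OF inj] by simp
  qed
  ultimately show ?thesis
    by blast
qed

end
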